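(* Let $I\unlhd K[x_1,\dots,x_n]$ be a homogeneous ideal, let $w\in\mathbb R^n$, and let $J:=\operatorname{in}_{(-1,w)}(\pi^{-1}I)\unlhd R[t,x]$. Then there exists a weight vector $u\in(\mathbb R_{>0})^{n+1}$ such that $J$ is weighted homogeneous with respect to $u$, with $u$ assigning weights to $(t,x_1,\dots,x_n)$.
   Context: Let $K$ be a complete field with a non-trivial discrete valuation $\nu$ and a uniformizing parameter $p$. Let $\mathcal O_K$ be its ring of integers. Let $R\subseteq\mathcal O_K$ be a dense noetherian subring with $p\in R$. The map $\pi:R[[t]][x]\to\mathcal O_K[x]\subseteq K[x]$ sends $t\mapsto p$, and $\pi^{-1}I$ is the preimage of $I$. For $f=\sum c_{\alpha,\beta}t^\beta x^\alpha\in R[[t]][x]$ and $v\in\mathbb R_{<0}\times\mathbb R^n$, $\operatorname{in}_v(f)\in R[t,x]$ is the sum of the terms with $v\cdot(\beta,\alpha)$ maximal. $\operatorname{in}_v(J)$ is the ideal generated by these. An ideal is weighted homogeneous with respect to $u$ if it is generated by polynomials that are homogeneous with respect to the $u$-weighted degree. *)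

theory Defs
  imports Complex_Main "HOL-Library.Poly_Mapping"
    "HOL-Computational_Algebra.Polynomial" "HOL-Computational_Algebra.Formal_Power_Series"
begin

(* Multivariate polynomials in variables indexed by a finite type 'n are elements of
   the ring of finitely supported maps from exponent vectors ('n =>0 nat) to coefficients
   (Poly_Mapping; multiplication = convolution).
   K[x] : coefficients 'a;  R[[t]][x] : coefficients 'a fps with all coefficients in R;
   R[t,x] = R[t][x] : coefficients 'a poly with all coefficients in R. *)

definition ideal_gen_in :: "'b::comm_ring_1 set \<Rightarrow> 'b set \<Rightarrow> 'b set" where
  "ideal_gen_in A S = {y. \<exists>F c. finite F \<and> F \<subseteq> S \<and> (\<forall>s\<in>F. c s \<in> A) \<and> y = (\<Sum>s\<in>F. c s * s)}"

definition discrete_valuation :: "('a::field \<Rightarrow> int) \<Rightarrow> bool" where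
  "discrete_valuation nu \<longleftrightarrow>
     (\<forall>x y. x \<noteq> 0 \<longrightarrow> y \<noteq> 0 \<longrightarrow> nu (x * y) = nu x + nu y) \<and>
     (\<forall>x y. x \<noteq> 0 \<longrightarrow> y \<noteq> 0 \<longrightarrow> x + y \<noteq> 0 \<longrightarrow> nu (x + y) \<ge> min (nu x) (nu y)) \<and>
     (\<exists>x. x \<noteq> 0 \<and> nu x \<noteq> 0)"

definition uniformizer :: "('a::field \<Rightarrow> int) \<Rightarrow> 'a \<Rightarrow> bool" where
  "uniformizer nu p \<longleftrightarrow> p \<noteq> 0 \<and> nu p > 0 \<and> (\<forall>x. x \<noteq> 0 \<longrightarrow> nu x > 0 \<longrightarrow> nu p \<le> nu x)"

definition vclose :: "('a::field \<Rightarrow> int) \<Rightarrow> int \<Rightarrow> 'a \<Rightarrow> 'a \<Rightarrow> bool" where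
  "vclose nu N x y \<longleftrightarrow> x = y \<or> nu (x - y) \<ge> N"

definition vcauchy :: "('a::field \<Rightarrow> int) \<Rightarrow> (nat \<Rightarrow> 'a) \<Rightarrow> bool" where
  "vcauchy nu s \<longleftrightarrow> (\<forall>N. \<exists>M. \<forall>m\<ge>M. \<forall>k\<ge>M. vclose nu N (s m) (s k))"

definition vconverges :: "('a::field \<Rightarrow> int) \<Rightarrow> (nat \<Rightarrow> 'a) \<Rightarrow> 'a \<Rightarrow> bool" where
  "vconverges nu s L \<longleftrightarrow> (\<forall>N. \<exists>M. \<forall>m\<ge>M. vclose nu N (s m) L)"

definition vcomplete :: "('a::field \<Rightarrow> int) \<Rightarrow> bool" where
  "vcomplete nu \<longleftrightarrow> (\<forall>s. vcauchy nu s \<longrightarrow> (\<exists>L. vconverges nu s L))"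

definition val_ring :: "('a::field \<Rightarrow> int) \<Rightarrow> 'a set" where
  "val_ring nu = {x. x = 0 \<or> nu x \<ge> 0}"

definition is_subring :: "'a::comm_ring_1 set \<Rightarrow> bool" where
  "is_subring R \<longleftrightarrow> 0 \<in> R \<and> 1 \<in> R \<and> (\<forall>x\<in>R. \<forall>y\<in>R. x + y \<in> R \<and> x - y \<in> R \<and> x * y \<in> R)"

definition ideal_of :: "'a::comm_ring_1 set \<Rightarrow> 'a set \<Rightarrow> bool" where
  "ideal_of R J \<longleftrightarrow> J \<subseteq> R \<and> 0 \<in> J \<and> (\<forall>x\<in>J. \<forall>y\<in>J. x + y \<in> J) \<and> (\<forall>r\<in>R. \<forall>x\<in>J. r * x \<in> J)"

definition noetherian_subring :: "'a::comm_ring_1 set \<Rightarrow> bool" where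
  "noetherian_subring R \<longleftrightarrow> is_subring R \<and>
     (\<forall>J. ideal_of R J \<longrightarrow> (\<exists>F. finite F \<and> F \<subseteq> J \<and> J = ideal_gen_in R F))"

definition dense_in_val_ring :: "('a::field \<Rightarrow> int) \<Rightarrow> 'a set \<Rightarrow> bool" where
  "dense_in_val_ring nu R \<longleftrightarrow> (\<forall>x\<in>val_ring nu. \<forall>N. \<exists>r\<in>R. vclose nu N x r)"

definition RTx :: "'a::comm_ring_1 set \<Rightarrow> (('n \<Rightarrow>\<^sub>0 nat) \<Rightarrow>\<^sub>0 'a fps) set" where
  "RTx R = {f. \<forall>\<alpha> \<beta>. fps_nth (Poly_Mapping.lookup f \<alpha>) \<beta> \<in> R}"

definition RtX :: "'a::comm_ring_1 set \<Rightarrow> (('n \<Rightarrow>\<^sub>0 nat) \<Rightarrow>\<^sub>0 'a poly) set" where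
  "RtX R = {g. \<forall>\<alpha> \<beta>. coeff (Poly_Mapping.lookup g \<alpha>) \<beta> \<in> R}"

text \<open>Preimage of an ideal I of K[x] under pi : R[[t]][x] \<rightarrow> O_K[x], t \<mapsto> p.
  pi f has coefficient at alpha the (valuation-adic) sum of the series
  sum over beta of c_{alpha,beta} p^beta.\<close>
definition pi_preimage :: "('a::field \<Rightarrow> int) \<Rightarrow> 'a \<Rightarrow> 'a set \<Rightarrow> (('n \<Rightarrow>\<^sub>0 nat) \<Rightarrow>\<^sub>0 'a) set
     \<Rightarrow> (('n \<Rightarrow>\<^sub>0 nat) \<Rightarrow>\<^sub>0 'a fps) set" where
  "pi_preimage nu p R I = {f \<in> RTx R. \<exists>h\<in>I. \<forall>\<alpha>.
       vconverges nu (\<lambda>m. \<Sum>\<beta><m. fps_nth (Poly_Mapping.lookup f \<alpha>) \<beta> * p ^ \<beta>) (Poly_Mapping.lookup h \<alpha>)}"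

definition vweight :: "('n::finite \<Rightarrow> real) \<Rightarrow> nat \<Rightarrow> ('n \<Rightarrow>\<^sub>0 nat) \<Rightarrow> real" where
  "vweight w \<beta> \<alpha> = - real \<beta> + (\<Sum>i\<in>UNIV. w i * real (Poly_Mapping.lookup \<alpha> i))"

definition is_initial_form :: "('n::finite \<Rightarrow> real) \<Rightarrow> (('n \<Rightarrow>\<^sub>0 nat) \<Rightarrow>\<^sub>0 'a::comm_ring_1 fps)
     \<Rightarrow> (('n \<Rightarrow>\<^sub>0 nat) \<Rightarrow>\<^sub>0 'a poly) \<Rightarrow> bool" where
  "is_initial_form w f g \<longleftrightarrow> (\<forall>\<alpha> \<beta>. coeff (Poly_Mapping.lookup g \<alpha>) \<beta> =
      (if fps_nth (Poly_Mapping.lookup f \<alpha>) \<beta> \<noteq> 0 \<and>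
          (\<forall>\<alpha>' \<beta>'. fps_nth (Poly_Mapping.lookup f \<alpha>') \<beta>' \<noteq> 0 \<longrightarrow> vweight w \<beta>' \<alpha>' \<le> vweight w \<beta> \<alpha>)
       then fps_nth (Poly_Mapping.lookup f \<alpha>) \<beta> else 0))"

definition initial_ideal :: "'a::comm_ring_1 set \<Rightarrow> ('n::finite \<Rightarrow> real)
     \<Rightarrow> (('n \<Rightarrow>\<^sub>0 nat) \<Rightarrow>\<^sub>0 'a fps) set \<Rightarrow> (('n \<Rightarrow>\<^sub>0 nat) \<Rightarrow>\<^sub>0 'a poly) set" where
  "initial_ideal R w J = ideal_gen_in (RtX R) {g. \<exists>f\<in>J. is_initial_form w f g}"

definition homogeneous_poly :: "(('n::finite \<Rightarrow>\<^sub>0 nat) \<Rightarrow>\<^sub>0 'a::zero) \<Rightarrow> bool" where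
  "homogeneous_poly f \<longleftrightarrow> (\<exists>d. \<forall>\<alpha>. Poly_Mapping.lookup f \<alpha> \<noteq> 0 \<longrightarrow> (\<Sum>i\<in>UNIV. Poly_Mapping.lookup \<alpha> i) = d)"

definition homogeneous_ideal :: "(('n::finite \<Rightarrow>\<^sub>0 nat) \<Rightarrow>\<^sub>0 'a::comm_ring_1) set \<Rightarrow> bool" where
  "homogeneous_ideal I \<longleftrightarrow> (\<exists>S. (\<forall>s\<in>S. homogeneous_poly s) \<and> I = ideal_gen_in UNIV S)"

text \<open>u0 is the weight of t, u i the weight of x_i.\<close>
definition weighted_homogeneous_poly :: "real \<Rightarrow> ('n::finite \<Rightarrow> real)
     \<Rightarrow> (('n \<Rightarrow>\<^sub>0 nat) \<Rightarrow>\<^sub>0 'a::zero poly) \<Rightarrow> bool" where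
  "weighted_homogeneous_poly u0 u g \<longleftrightarrow> (\<exists>d. \<forall>\<alpha> \<beta>. coeff (Poly_Mapping.lookup g \<alpha>) \<beta> \<noteq> 0 \<longrightarrow>
       u0 * real \<beta> + (\<Sum>i\<in>UNIV. u i * real (Poly_Mapping.lookup \<alpha> i)) = d)"

definition weighted_homogeneous_ideal :: "'a::comm_ring_1 set \<Rightarrow> real \<Rightarrow> ('n::finite \<Rightarrow> real)
     \<Rightarrow> (('n \<Rightarrow>\<^sub>0 nat) \<Rightarrow>\<^sub>0 'a poly) set \<Rightarrow> bool" where
  "weighted_homogeneous_ideal R u0 u J \<longleftrightarrow>
     (\<exists>S. S \<subseteq> RtX R \<and> (\<forall>s\<in>S. weighted_homogeneous_poly u0 u s) \<and> J = ideal_gen_in (RtX R) S)"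

end

theory Submission imports Defs begin

text \<open>Since \<open>I\<close> is homogeneous and \<open>\<pi>\<close> acts coefficientwise in \<open>x\<close>, the preimage \<open>\<pi>\<^sup>-\<^sup>1 I\<close> is
  stable under taking homogeneous components in \<open>x\<close>. The \<open>x\<close>-homogeneous components of an initial
  form \<open>in\<^sub>(\<^sub>-\<^sub>1\<^sub>,\<^sub>w\<^sub>)(f)\<close> are the initial forms of the corresponding components of \<open>f\<close>, so the initial
  ideal is generated by initial forms of \<open>x\<close>-homogeneous elements. All terms \<open>t\<^sup>\<beta> x\<^sup>\<alpha>\<close> of such an
  initial form have the same \<open>x\<close>-degree \<open>d\<close> and the same \<open>(-1,w)\<close>-weight \<open>c\<close>, hence for
  \<open>b > \<Sum>\<^sub>i \<bar>w\<^sub>i\<bar>\<close> the positive weight \<open>u = (1, b - w)\<close> gives each of them the degree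
  \<open>\<beta> + b d - w\<cdot>\<alpha> = b d - c\<close>.\<close>

definition total_deg :: "('n::finite \<Rightarrow>\<^sub>0 nat) \<Rightarrow> nat" where
  "total_deg \<alpha> = (\<Sum>i\<in>UNIV. Poly_Mapping.lookup \<alpha> i)"

definition homog_component :: "nat \<Rightarrow> (('n::finite \<Rightarrow>\<^sub>0 nat) \<Rightarrow>\<^sub>0 'b::zero) \<Rightarrow> ('n \<Rightarrow>\<^sub>0 nat) \<Rightarrow>\<^sub>0 'b" where
  "homog_component d f = Abs_poly_mapping (\<lambda>\<alpha>. if total_deg \<alpha> = d then Poly_Mapping.lookup f \<alpha> else 0)"

definition homogeneous_of_deg :: "nat \<Rightarrow> (('n::finite \<Rightarrow>\<^sub>0 nat) \<Rightarrow>\<^sub>0 'b::zero) \<Rightarrow> bool" where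
  "homogeneous_of_deg d f \<longleftrightarrow> (\<forall>\<alpha>\<in>Poly_Mapping.keys f. total_deg \<alpha> = d)"

lemma lookup_homog_component:
  "Poly_Mapping.lookup (homog_component d f) \<alpha> = (if total_deg \<alpha> = d then Poly_Mapping.lookup f \<alpha> else 0)"
proof -
  have "finite {\<alpha>. (if total_deg \<alpha> = d then Poly_Mapping.lookup f \<alpha> else 0) \<noteq> 0}"
    by (rule finite_subset[OF _ finite_lookup[of f]]) auto
  then show ?thesis unfolding homog_component_def by simp
qed

lemma total_deg_add: "total_deg (\<alpha> + \<gamma>) = total_deg \<alpha> + total_deg \<gamma>"
  unfolding total_deg_def by (simp add: lookup_add sum.distrib)

lemma homog_component_sum:
  "homog_component d (\<Sum>x\<in>X. f x) = (\<Sum>x\<in>X. homog_component d (f x :: _ \<Rightarrow>\<^sub>0 'b::comm_monoid_add))"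
  by (rule poly_mapping_eqI) (simp add: lookup_homog_component lookup_sum)

lemma homog_component_of_homogeneous:
  "homogeneous_of_deg e f \<Longrightarrow> homog_component d f = (if e = d then f else 0)"
  by (rule poly_mapping_eqI) (auto simp: lookup_homog_component homogeneous_of_deg_def in_keys_iff)

lemma homogeneous_of_deg_homog_component: "homogeneous_of_deg d (homog_component d f)"
  by (auto simp: homogeneous_of_deg_def in_keys_iff lookup_homog_component split: if_splits)

lemma homogeneous_of_deg_mult:
  "homogeneous_of_deg k f \<Longrightarrow> homogeneous_of_deg e g \<Longrightarrow>
     homogeneous_of_deg (k + e) (f * (g :: _ \<Rightarrow>\<^sub>0 'b::comm_semiring_1))"
  unfolding homogeneous_of_deg_def using keys_mult[of f g] by (auto simp: total_deg_add)

lemma homogeneous_poly_iff: "homogeneous_poly f \<longleftrightarrow> (\<exists>d. homogeneous_of_deg d f)"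
  unfolding homogeneous_poly_def homogeneous_of_deg_def total_deg_def by (auto simp: in_keys_iff)

lemma sum_homog_components:
  assumes "finite K" and "total_deg ` Poly_Mapping.keys f \<subseteq> K"
  shows "(\<Sum>k\<in>K. homog_component k f) = (f :: _ \<Rightarrow>\<^sub>0 'b::comm_monoid_add)"
proof (rule poly_mapping_eqI)
  fix \<alpha>
  have "(\<Sum>k\<in>K. Poly_Mapping.lookup (homog_component k f) \<alpha>) =
      (if total_deg \<alpha> \<in> K then Poly_Mapping.lookup f \<alpha> else 0)"
    using assms(1) by (simp add: lookup_homog_component sum.delta)
  also have "\<dots> = Poly_Mapping.lookup f \<alpha>"
    using assms(2) by (metis image_subset_iff in_keys_iff)
  finally show "Poly_Mapping.lookup (\<Sum>k\<in>K. homog_component k f) \<alpha> = Poly_Mapping.lookup f \<alpha>"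
    by (simp add: lookup_sum)
qed

lemma sum_nonzero_homog_components:
  fixes f :: "('n::finite \<Rightarrow>\<^sub>0 nat) \<Rightarrow>\<^sub>0 'b::comm_monoid_add"
  shows "\<exists>F. finite F \<and> F \<subseteq> {homog_component d f |d. homog_component d f \<noteq> 0} \<and> f = \<Sum>F"
proof -
  define D where "D = total_deg ` Poly_Mapping.keys f"
  have witness: "\<exists>\<alpha>. Poly_Mapping.lookup (homog_component d f) \<alpha> \<noteq> 0 \<and> total_deg \<alpha> = d"
    if "d \<in> D" for d
    using that by (auto simp: D_def lookup_homog_component in_keys_iff)
  then have nonzero: "homog_component d f \<noteq> 0" if "d \<in> D" for d
    using that by fastforce
  have "inj_on (\<lambda>d. homog_component d f) D"
    by (rule inj_onI) (metis witness lookup_homog_component)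
  then have "\<Sum>((\<lambda>d. homog_component d f) ` D) = (\<Sum>d\<in>D. homog_component d f)"
    by (simp add: sum.reindex)
  also have "\<dots> = f" by (rule sum_homog_components) (simp_all add: D_def)
  finally show ?thesis
    using nonzero by (intro exI[of _ "(\<lambda>d. homog_component d f) ` D"]) (auto simp: D_def)
qed

lemma homog_component_mult_homogeneous:
  fixes f g :: "('n::finite \<Rightarrow>\<^sub>0 nat) \<Rightarrow>\<^sub>0 'b::comm_semiring_1"
  assumes "homogeneous_of_deg e g"
  shows "homog_component d (f * g) = (if e \<le> d then homog_component (d - e) f * g else 0)"
proof -
  define K where "K = insert (d - e) (total_deg ` Poly_Mapping.keys f)"
  have "finite K" by (simp add: K_def)
  have "(\<Sum>k\<in>K. homog_component k f) = f"
    by (rule sum_homog_components) (auto simp: K_def)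
  then have "f * g = (\<Sum>k\<in>K. homog_component k f * g)"
    by (simp flip: sum_distrib_right)
  then have "homog_component d (f * g) = homog_component d (\<Sum>k\<in>K. homog_component k f * g)"
    by simp
  also have "\<dots> = (\<Sum>k\<in>K. homog_component d (homog_component k f * g))"
    by (rule homog_component_sum)
  also have "\<dots> = (\<Sum>k\<in>K. if k = d - e then (if e \<le> d then homog_component k f * g else 0) else 0)"
  proof (rule sum.cong[OF refl])
    fix k
    have "homogeneous_of_deg (k + e) (homog_component k f * g)"
      by (rule homogeneous_of_deg_mult[OF homogeneous_of_deg_homog_component assms])
    then show "homog_component d (homog_component k f * g) =
        (if k = d - e then (if e \<le> d then homog_component k f * g else 0) else 0)"
      by (auto simp: homog_component_of_homogeneous)
  qed
  also have "\<dots> = (if e \<le> d then homog_component (d - e) f * g else 0)"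
    using \<open>finite K\<close> by (simp add: sum.delta K_def)
  finally show ?thesis .
qed

lemma homog_component_mem_homogeneous_ideal:
  fixes I :: "(('n::finite \<Rightarrow>\<^sub>0 nat) \<Rightarrow>\<^sub>0 'a::comm_ring_1) set"
  assumes "homogeneous_ideal I" and "h \<in> I"
  shows "homog_component d h \<in> I"
proof -
  obtain S where S: "\<forall>s\<in>S. homogeneous_poly s" "I = ideal_gen_in UNIV S"
    using assms(1) unfolding homogeneous_ideal_def by blast
  obtain F c where F: "finite F" "F \<subseteq> S" "h = (\<Sum>s\<in>F. c s * s)"
    using assms(2) S(2) unfolding ideal_gen_in_def by blast
  have "\<forall>s\<in>F. \<exists>e. homogeneous_of_deg e s"
    using F(2) S(1) homogeneous_poly_iff by blast
  from bchoice[OF this] obtain e where e: "\<And>s. s \<in> F \<Longrightarrow> homogeneous_of_deg (e s) s"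
    by blast
  define c' where "c' s = (if e s \<le> d then homog_component (d - e s) (c s) else 0)" for s
  have "homog_component d h = (\<Sum>s\<in>F. c' s * s)"
    unfolding F(3) homog_component_sum c'_def
    by (rule sum.cong) (simp_all add: homog_component_mult_homogeneous[OF e])
  then show ?thesis
    unfolding S(2) ideal_gen_in_def using F(1,2) by blast
qed

lemma homog_component_mem_pi_preimage:
  assumes "homogeneous_ideal I" and "f \<in> pi_preimage nu p R I" and "0 \<in> R"
  shows "homog_component d f \<in> pi_preimage nu p R I"
proof -
  obtain h where h: "h \<in> I" "f \<in> RTx R"
    "\<And>\<alpha>. vconverges nu (\<lambda>m. \<Sum>\<beta><m. fps_nth (Poly_Mapping.lookup f \<alpha>) \<beta> * p ^ \<beta>) (Poly_Mapping.lookup h \<alpha>)"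
    using assms(2) unfolding pi_preimage_def by blast
  have "homog_component d f \<in> RTx R"
    using h(2) assms(3) by (auto simp: RTx_def lookup_homog_component)
  moreover have "homog_component d h \<in> I"
    by (rule homog_component_mem_homogeneous_ideal[OF assms(1) h(1)])
  moreover have "vconverges nu (\<lambda>m. \<Sum>\<beta><m. fps_nth (Poly_Mapping.lookup (homog_component d f) \<alpha>) \<beta> * p ^ \<beta>)
      (Poly_Mapping.lookup (homog_component d h) \<alpha>)" for \<alpha>
    using h(3)[of \<alpha>] by (simp add: lookup_homog_component vconverges_def vclose_def)
  ultimately show ?thesis unfolding pi_preimage_def by blast
qed

lemma ideal_gen_in_mono: "S \<subseteq> T \<Longrightarrow> ideal_gen_in A S \<subseteq> ideal_gen_in A T"
  unfolding ideal_gen_in_def by blast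

lemma sum_mem_add_closed:
  "finite X \<Longrightarrow> 0 \<in> A \<Longrightarrow> \<forall>x\<in>A. \<forall>y\<in>A. x + y \<in> A \<Longrightarrow> \<forall>x\<in>X. f x \<in> A \<Longrightarrow> sum f X \<in> A"
  by (induction X rule: finite_induct) auto

lemma ideal_gen_in_subset_if_sums:
  fixes A :: "'b::comm_ring_1 set"
  assumes A0: "0 \<in> A" and Aadd: "\<forall>x\<in>A. \<forall>y\<in>A. x + y \<in> A"
    and sums: "\<forall>g\<in>G. \<exists>F. finite F \<and> F \<subseteq> S \<and> g = \<Sum>F"
  shows "ideal_gen_in A G \<subseteq> ideal_gen_in A S"
proof
  fix y assume "y \<in> ideal_gen_in A G"
  then obtain F c where F: "finite F" "F \<subseteq> G" "\<forall>s\<in>F. c s \<in> A" "y = (\<Sum>s\<in>F. c s * s)"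
    unfolding ideal_gen_in_def by blast
  obtain Fg where Fg: "\<forall>g\<in>G. finite (Fg g) \<and> Fg g \<subseteq> S \<and> g = \<Sum>(Fg g)"
    using sums by metis
  define U where "U = (\<Union>g\<in>F. Fg g)"
  have "finite U" and "U \<subseteq> S" unfolding U_def using F Fg by auto
  define c' where "c' s = (\<Sum>g\<in>F. if s \<in> Fg g then c g else 0)" for s
  have "y = (\<Sum>g\<in>F. c g * \<Sum>(Fg g))"
    unfolding F(4) by (rule sum.cong[OF refl]) (use F(2) Fg in auto)
  also have "\<dots> = (\<Sum>g\<in>F. \<Sum>s\<in>U. (if s \<in> Fg g then c g else 0) * s)"
  proof (rule sum.cong[OF refl])
    fix g assume "g \<in> F"
    then have "Fg g \<subseteq> U" unfolding U_def by auto
    have "c g * \<Sum>(Fg g) = (\<Sum>s\<in>Fg g. (if s \<in> Fg g then c g else 0) * s)"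
      by (simp add: sum_distrib_left)
    also have "\<dots> = (\<Sum>s\<in>U. (if s \<in> Fg g then c g else 0) * s)"
      by (rule sum.mono_neutral_left[OF \<open>finite U\<close> \<open>Fg g \<subseteq> U\<close>]) auto
    finally show "c g * \<Sum>(Fg g) = (\<Sum>s\<in>U. (if s \<in> Fg g then c g else 0) * s)" .
  qed
  also have "\<dots> = (\<Sum>s\<in>U. c' s * s)"
    unfolding c'_def by (subst sum.swap) (simp add: sum_distrib_right)
  finally have y: "y = (\<Sum>s\<in>U. c' s * s)" .
  have "c' s \<in> A" for s
    unfolding c'_def by (rule sum_mem_add_closed[OF F(1) A0 Aadd]) (use F(3) A0 in simp)
  then show "y \<in> ideal_gen_in A S"
    unfolding ideal_gen_in_def using \<open>finite U\<close> \<open>U \<subseteq> S\<close> y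
    by (intro CollectI exI[of _ U] exI[of _ c']) simp
qed

definition weight_maximal_term :: "('n::finite \<Rightarrow> real) \<Rightarrow> (('n \<Rightarrow>\<^sub>0 nat) \<Rightarrow>\<^sub>0 'a::zero fps)
    \<Rightarrow> ('n \<Rightarrow>\<^sub>0 nat) \<Rightarrow> nat \<Rightarrow> bool" where
  "weight_maximal_term w f \<alpha> \<beta> \<longleftrightarrow> fps_nth (Poly_Mapping.lookup f \<alpha>) \<beta> \<noteq> 0 \<and>
     (\<forall>\<alpha>' \<beta>'. fps_nth (Poly_Mapping.lookup f \<alpha>') \<beta>' \<noteq> 0 \<longrightarrow> vweight w \<beta>' \<alpha>' \<le> vweight w \<beta> \<alpha>)"

lemma is_initial_form_iff:
  "is_initial_form w f g \<longleftrightarrow> (\<forall>\<alpha> \<beta>. coeff (Poly_Mapping.lookup g \<alpha>) \<beta> =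
     (if weight_maximal_term w f \<alpha> \<beta> then fps_nth (Poly_Mapping.lookup f \<alpha>) \<beta> else 0))"
  unfolding is_initial_form_def weight_maximal_term_def ..

lemma weight_maximal_term_if_initial_form_coeff_nonzero:
  "is_initial_form w f g \<Longrightarrow> coeff (Poly_Mapping.lookup g \<alpha>) \<beta> \<noteq> 0 \<Longrightarrow> weight_maximal_term w f \<alpha> \<beta>"
  unfolding is_initial_form_iff by (metis (full_types))

text \<open>The maximal \<open>(-1,w)\<close>-weight of \<open>f\<close> is attained by a term of \<open>x\<close>-degree \<open>d\<close>, so it is also the
  maximal weight of the degree-\<open>d\<close> component.\<close>

lemma weight_maximal_term_homog_component_iff:
  assumes "weight_maximal_term w f \<alpha>\<^sub>0 \<beta>\<^sub>0" and "total_deg \<alpha>\<^sub>0 = d" and "total_deg \<alpha> = d"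
  shows "weight_maximal_term w (homog_component d f) \<alpha> \<beta> \<longleftrightarrow> weight_maximal_term w f \<alpha> \<beta>"
proof
  assume max_d: "weight_maximal_term w (homog_component d f) \<alpha> \<beta>"
  then have "vweight w \<beta>\<^sub>0 \<alpha>\<^sub>0 \<le> vweight w \<beta> \<alpha>"
    using assms(1,2) by (auto simp: weight_maximal_term_def lookup_homog_component)
  then show "weight_maximal_term w f \<alpha> \<beta>"
    using max_d assms(1,3) unfolding weight_maximal_term_def
    by (auto simp: lookup_homog_component) (meson order_trans)
qed (use assms(3) in \<open>auto simp: weight_maximal_term_def lookup_homog_component\<close>)

lemma initial_form_homog_component:
  assumes init: "is_initial_form w f g" and nonzero: "homog_component d g \<noteq> 0"
  shows "is_initial_form w (homog_component d f) (homog_component d g)"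
proof -
  obtain \<alpha>\<^sub>0 where "Poly_Mapping.lookup (homog_component d g) \<alpha>\<^sub>0 \<noteq> 0"
    using nonzero by (metis poly_mapping_eqI lookup_zero)
  then have deg\<^sub>0: "total_deg \<alpha>\<^sub>0 = d" and "Poly_Mapping.lookup g \<alpha>\<^sub>0 \<noteq> 0"
    by (auto simp: lookup_homog_component split: if_splits)
  then obtain \<beta>\<^sub>0 where "coeff (Poly_Mapping.lookup g \<alpha>\<^sub>0) \<beta>\<^sub>0 \<noteq> 0"
    by (metis leading_coeff_0_iff)
  then have "weight_maximal_term w f \<alpha>\<^sub>0 \<beta>\<^sub>0"
    by (rule weight_maximal_term_if_initial_form_coeff_nonzero[OF init])
  with deg\<^sub>0 init show ?thesis
    by (auto simp: is_initial_form_iff lookup_homog_component weight_maximal_term_homog_component_iff)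
qed

lemma initial_form_sum_of_component_initial_forms:
  assumes "is_initial_form w f g"
  shows "\<exists>F. finite F \<and> F \<subseteq> {h. \<exists>d. is_initial_form w (homog_component d f) h} \<and> g = \<Sum>F"
proof -
  obtain F where F: "finite F" "F \<subseteq> {homog_component d g |d. homog_component d g \<noteq> 0}" "g = \<Sum>F"
    using sum_nonzero_homog_components by blast
  have F_initial: "F \<subseteq> {h. \<exists>d. is_initial_form w (homog_component d f) h}"
  proof
    fix h assume "h \<in> F"
    then obtain d where "h = homog_component d g" and "homog_component d g \<noteq> 0"
      using F(2) by blast
    then show "h \<in> {h. \<exists>d. is_initial_form w (homog_component d f) h}"
      using initial_form_homog_component[OF assms] by blast
  qed
  show ?thesis by (intro exI[of _ F] conjI F(1,3) F_initial)
qed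

lemma weighted_homogeneous_polyI:
  assumes "\<And>\<alpha> \<beta> \<alpha>' \<beta>'. coeff (Poly_Mapping.lookup g \<alpha>) \<beta> \<noteq> 0 \<Longrightarrow> coeff (Poly_Mapping.lookup g \<alpha>') \<beta>' \<noteq> 0 \<Longrightarrow>
      u0 * real \<beta> + (\<Sum>i\<in>UNIV. u i * real (Poly_Mapping.lookup \<alpha> i)) =
      u0 * real \<beta>' + (\<Sum>i\<in>UNIV. u i * real (Poly_Mapping.lookup \<alpha>' i))"
  shows "weighted_homogeneous_poly u0 u g"
proof (cases "\<exists>\<alpha> \<beta>. coeff (Poly_Mapping.lookup g \<alpha>) \<beta> \<noteq> 0")
  case True
  then obtain \<alpha>\<^sub>0 \<beta>\<^sub>0 where nonzero: "coeff (Poly_Mapping.lookup g \<alpha>\<^sub>0) \<beta>\<^sub>0 \<noteq> 0" by blast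
  show ?thesis
    unfolding weighted_homogeneous_poly_def by (intro exI allI impI) (erule assms[OF _ nonzero])
qed (auto simp: weighted_homogeneous_poly_def)

lemma shifted_weighted_degree:
  "real \<beta> + (\<Sum>i\<in>UNIV. (b - w i) * real (Poly_Mapping.lookup \<alpha> i)) = b * real (total_deg \<alpha>) - vweight w \<beta> \<alpha>"
  unfolding vweight_def total_deg_def by (simp add: algebra_simps sum_subtractf sum_distrib_left)

lemma weighted_homogeneous_initial_form:
  assumes "homogeneous_of_deg d f" and init: "is_initial_form w f g"
  shows "weighted_homogeneous_poly 1 (\<lambda>i. b - w i) g"
proof (rule weighted_homogeneous_polyI)
  fix \<alpha> \<beta> \<alpha>' \<beta>'
  assume "coeff (Poly_Mapping.lookup g \<alpha>) \<beta> \<noteq> 0" and "coeff (Poly_Mapping.lookup g \<alpha>') \<beta>' \<noteq> 0"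
  then have "weight_maximal_term w f \<alpha> \<beta>" and "weight_maximal_term w f \<alpha>' \<beta>'"
    by (simp_all add: weight_maximal_term_if_initial_form_coeff_nonzero[OF init])
  then have "vweight w \<beta> \<alpha> = vweight w \<beta>' \<alpha>'"
    by (auto simp: weight_maximal_term_def intro: order_antisym)
  moreover have "\<alpha> \<in> Poly_Mapping.keys f" and "\<alpha>' \<in> Poly_Mapping.keys f"
    using \<open>weight_maximal_term w f \<alpha> \<beta>\<close> \<open>weight_maximal_term w f \<alpha>' \<beta>'\<close>
    by (auto simp: weight_maximal_term_def in_keys_iff)
  then have "total_deg \<alpha> = total_deg \<alpha>'"
    using assms(1) by (simp add: homogeneous_of_deg_def)
  ultimately show "1 * real \<beta> + (\<Sum>i\<in>UNIV. (b - w i) * real (Poly_Mapping.lookup \<alpha> i)) =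
      1 * real \<beta>' + (\<Sum>i\<in>UNIV. (b - w i) * real (Poly_Mapping.lookup \<alpha>' i))"
    by (simp add: shifted_weighted_degree)
qed

lemma initial_form_mem_RtX: "f \<in> RTx R \<Longrightarrow> 0 \<in> R \<Longrightarrow> is_initial_form w f g \<Longrightarrow> g \<in> RtX R"
  unfolding RTx_def RtX_def is_initial_form_def by auto

lemma weighted_homogeneous_initial_ideal:
  assumes R0: "0 \<in> R" and Radd: "\<forall>x\<in>R. \<forall>y\<in>R. x + y \<in> R"
    and PR: "P \<subseteq> RTx R" and P_components: "\<And>f d. f \<in> P \<Longrightarrow> homog_component d f \<in> P"
  shows "weighted_homogeneous_ideal R 1 (\<lambda>i. b - w i) (initial_ideal R w P)"
proof -
  define G where "G = {g. \<exists>f\<in>P. is_initial_form w f g}"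
  define S where "S = {g. \<exists>f\<in>P. \<exists>d. is_initial_form w (homog_component d f) g}"
  have "S \<subseteq> G" using P_components by (auto simp: S_def G_def)
  have "S \<subseteq> RtX R"
    using PR P_components R0 by (auto simp: S_def intro: initial_form_mem_RtX)
  have "\<forall>s\<in>S. weighted_homogeneous_poly 1 (\<lambda>i. b - w i) s"
    by (auto simp: S_def intro: weighted_homogeneous_initial_form homogeneous_of_deg_homog_component)
  have "\<forall>g\<in>G. \<exists>F. finite F \<and> F \<subseteq> S \<and> g = \<Sum>F"
  proof
    fix g assume "g \<in> G"
    then obtain f where "f \<in> P" and "is_initial_form w f g" by (auto simp: G_def)
    then obtain F where F: "finite F" "F \<subseteq> {h. \<exists>d. is_initial_form w (homog_component d f) h}" "g = \<Sum>F"
      using initial_form_sum_of_component_initial_forms by blast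
    have "{h. \<exists>d. is_initial_form w (homog_component d f) h} \<subseteq> S"
      using \<open>f \<in> P\<close> by (auto simp: S_def)
    with F show "\<exists>F. finite F \<and> F \<subseteq> S \<and> g = \<Sum>F"
      by (intro exI[of _ F]) auto
  qed
  moreover have "0 \<in> RtX R" and "\<forall>x\<in>RtX R. \<forall>y\<in>RtX R. x + y \<in> RtX R"
    using R0 Radd by (simp_all add: RtX_def lookup_add)
  ultimately have "initial_ideal R w P = ideal_gen_in (RtX R) S"
    unfolding initial_ideal_def G_def[symmetric]
    by (intro subset_antisym ideal_gen_in_subset_if_sums ideal_gen_in_mono \<open>S \<subseteq> G\<close>)
  with \<open>S \<subseteq> RtX R\<close> \<open>\<forall>s\<in>S. weighted_homogeneous_poly 1 (\<lambda>i. b - w i) s\<close> show ?thesis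
    unfolding weighted_homogeneous_ideal_def by blast
qed

theorem lemma5p2:
  fixes nu :: "'a::field \<Rightarrow> int" and p :: 'a and R :: "'a set"
    and I :: "(('n::finite \<Rightarrow>\<^sub>0 nat) \<Rightarrow>\<^sub>0 'a) set" and w :: "'n \<Rightarrow> real"
  assumes "discrete_valuation nu" and "vcomplete nu" and "uniformizer nu p"
    and "R \<subseteq> val_ring nu" and "noetherian_subring R" and "dense_in_val_ring nu R" and "p \<in> R"
    and "homogeneous_ideal I"
  shows "\<exists>u0 (u :: 'n \<Rightarrow> real). u0 > 0 \<and> (\<forall>i. u i > 0) \<and>
           weighted_homogeneous_ideal R u0 u (initial_ideal R w (pi_preimage nu p R I))"
proof -
  have R0: "0 \<in> R" and Radd: "\<forall>x\<in>R. \<forall>y\<in>R. x + y \<in> R"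
    using assms(5) unfolding noetherian_subring_def is_subring_def by auto
  define b where "b = (\<Sum>i\<in>UNIV. \<bar>w i\<bar>) + 1"
  have "b - w i > 0" for i
    using member_le_sum[of i UNIV "\<lambda>i. \<bar>w i\<bar>"] by (simp add: b_def)
  moreover have "pi_preimage nu p R I \<subseteq> RTx R" by (auto simp: pi_preimage_def)
  then have "weighted_homogeneous_ideal R 1 (\<lambda>i. b - w i) (initial_ideal R w (pi_preimage nu p R I))"
    by (rule weighted_homogeneous_initial_ideal[OF R0 Radd _ homog_component_mem_pi_preimage[OF assms(8) _ R0]])
  ultimately show ?thesis by (intro exI[of _ 1] exI[of _ "\<lambda>i. b - w i"]) auto
qed

end
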